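(* Let $(x_i(t),v_i(t))_{i=1}^N$ follow the sticky particle Cucker–Smale dynamics associated with data $(x_i^0,v_i^0,m_i)_{i=1}^N$, where $\sum_{i=1}^N m_i=1$. Define $\psi_i^0:=v_i^0+\sum_{j=1}^N m_j\omega(x_i^0-x_j^0)$, $\underline\psi:=\min_{1\le j\le N}\psi_j^0$, $\bar\psi:=\max_{1\le j\le N}\psi_j^0$, and $\psi_i(t):=v_i(t)+\sum_{j=1}^N m_j\,\omega(x_i(t)-x_j(t))$. Then for all $i=1,\dots,N$ and all $t\ge0$: $$\psi_i(t)\in[\underline\psi,\bar\psi],\qquad \underline\psi-\|\omega\|_{L^\infty(\mathbb{R})}\le v_i(t)\le\bar\psi.$$ Consequently, if $\{x_i^0\}_{i=1}^N\subset[-R^0,R^0]$, then $\{x_i(t)\}_{i=1}^N\subset[-R(t),R(t)]$ for all $t\ge0$, where $R(t):=R^0+t\tilde M$ and $\tilde M:=\max\{|\underline\psi-\|\omega\|_{L^\infty(\mathbb{R})}|,\,|\bar\psi|\}$.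
   Context: Standing assumption (H): $\omega:\mathbb{R}\to[0,+\infty)$, $\omega\in W^{1,1}(\mathbb{R})\cap W^{1,\infty}(\mathbb{R})$, $\int_{\mathbb{R}}\omega\,dx=1$, and $\phi:=\omega'\in L^1(\mathbb{R})\cap L^\infty(\mathbb{R})$. Sticky particle Cucker–Smale dynamics: given $N\in\mathbb{N}$, masses $m_1,\dots,m_N>0$ with $\sum_i m_i=1$, initial positions $x_1^0\le\dots\le x_N^0$ and initial velocities $v_1^0,\dots,v_N^0$, the trajectories $(x_i(t),v_i(t))$, $t\ge0$, have continuous positions with $x_1(t)\le\dots\le x_N(t)$. Let $J_i(t):=\{j\in\{1,\dots,N\}: x_j(t)=x_i(t)\}$; particles that meet stick together, i.e. $J_i(t)\subseteq J_i(s)$ for $0\le t\le s$. A collision time is a time at which two or more particles that were apart come to have the same position for the first time. At times $t$ that are not collision times, $\dot x_i=v_i$ and $\dot v_i=\sum_{j=1}^N m_j\phi(x_i-x_j)(v_j-v_i)$. At a collision time $t$, the particles in $J_i(t)$ continue with the common velocity $v_i(t+)=\frac{\sum_{j\in J_i(t)}m_jv_j(t-)}{\sum_{j\in J_i(t)}m_j}$. *)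

theory Defs
  imports "HOL-Analysis.Analysis" "HOL-Probability.Essential_Supremum"
begin

text \<open>Particles are indexed by 0..N-1 (the paper uses 1..N).\<close>

definition Linf_norm :: "(real \<Rightarrow> real) \<Rightarrow> real" where
  "Linf_norm f = real_of_ereal (esssup lborel (\<lambda>y. ereal \<bar>f y\<bar>))"

definition cluster :: "nat \<Rightarrow> (nat \<Rightarrow> real \<Rightarrow> real) \<Rightarrow> nat \<Rightarrow> real \<Rightarrow> nat set" where
  "cluster N x i t = {j. j < N \<and> x j t = x i t}"

definition collision_time :: "nat \<Rightarrow> (nat \<Rightarrow> real \<Rightarrow> real) \<Rightarrow> real \<Rightarrow> bool" where
  "collision_time N x t \<longleftrightarrow> t > 0 \<and>
     (\<exists>i<N. \<exists>j<N. x i t = x j t \<and> (\<forall>s. 0 \<le> s \<and> s < t \<longrightarrow> x i s \<noteq> x j s))"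

text \<open>Convention: at a collision time t the velocity v_i(t) is the post-collision
  velocity v_i(t+), i.e. v_i is right-continuous there.\<close>
definition sticky_CS ::
  "(real \<Rightarrow> real) \<Rightarrow> nat \<Rightarrow> (nat \<Rightarrow> real) \<Rightarrow> (nat \<Rightarrow> real) \<Rightarrow> (nat \<Rightarrow> real)
     \<Rightarrow> (nat \<Rightarrow> real \<Rightarrow> real) \<Rightarrow> (nat \<Rightarrow> real \<Rightarrow> real) \<Rightarrow> bool" where
  "sticky_CS \<phi> N m x0 v0 x v \<longleftrightarrow>
     (\<forall>i<N. x i 0 = x0 i \<and> v i 0 = v0 i) \<and>
     (\<forall>i<N. continuous_on {0..} (x i)) \<and>
     (\<forall>t\<ge>0. \<forall>i. Suc i < N \<longrightarrow> x i t \<le> x (Suc i) t) \<and>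
     (\<forall>i<N. \<forall>t s. 0 \<le> t \<and> t \<le> s \<longrightarrow> cluster N x i t \<subseteq> cluster N x i s) \<and>
     (\<forall>t\<ge>0. \<not> collision_time N x t \<longrightarrow>
        (\<forall>i<N. (x i has_real_derivative v i t) (at t within {0..}) \<and>
               (v i has_real_derivative
                  (\<Sum>j<N. m j * \<phi> (x i t - x j t) * (v j t - v i t))) (at t within {0..}))) \<and>
     (\<forall>t. collision_time N x t \<longrightarrow>
        (\<exists>l. (\<forall>j<N. (v j \<longlongrightarrow> l j) (at_left t)) \<and>
             (\<forall>i<N. v i t = (\<Sum>j\<in>cluster N x i t. m j * l j) / (\<Sum>j\<in>cluster N x i t. m j) \<and>
                    (v i \<longlongrightarrow> v i t) (at_right t))))"

end

theory Submission
  imports Defs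
begin

(* The quantity psi_i = v_i + sum_j m_j omega (x_i - x_j) is constant between collisions:
   since omega' = phi, the time derivative of the interaction sum is
   sum_j m_j phi (x_i - x_j) (v_i - v_j) = - v_i'.  At a collision the interaction sum is
   continuous and takes the same value on the whole cluster, so the sticking rule replaces
   psi_i by the mass-weighted mean of the psi_k over the cluster.  Collision times are
   finitely many (each is the first meeting time of some pair of particles), hence psi_i (t)
   never leaves [min psi^0, max psi^0].  As 0 <= sum_j m_j omega <= ||omega||_inf, this bounds
   v_i, and integrating v_i bounds x_i.

   Since omega is merely Lipschitz, constancy between collisions rests on the chain rule
   int_c^d phi (y) y' = omega (y d) - omega (y c) for C^1 paths y, obtained from the change of
   variables formula where y' <> 0 and from the Lipschitz bound where y' = 0. *)

locale bounded_primitive =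
  fixes \<phi> \<omega> :: "real \<Rightarrow> real" and B :: real
  assumes bound: "\<And>z. \<bar>\<phi> z\<bar> \<le> B"
    and primitive: "\<And>a b. a \<le> b \<Longrightarrow> (\<phi> has_integral \<omega> b - \<omega> a) {a..b}"
begin

lemma primitive_lipschitz: "B-lipschitz_on UNIV \<omega>"
proof (rule lipschitz_onI)
  show B_nonneg: "0 \<le> B" using bound[of 0] by linarith
  have ordered: "\<bar>\<omega> b - \<omega> a\<bar> \<le> B * (b - a)" if "a \<le> b" for a b
    using has_integral_bound_real[OF B_nonneg finite.emptyI primitive[OF that]] bound that by simp
  fix a b :: real
  show "dist (\<omega> a) (\<omega> b) \<le> B * dist a b"
    using ordered[of a b] ordered[of b a] by (cases "a \<le> b") (auto simp: dist_real_def abs_minus_commute)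
qed

lemma primitive_continuous: "continuous_on UNIV \<omega>"
  using primitive_lipschitz by (rule lipschitz_on_continuous_on)

lemma has_real_derivative_comp_zero:
  assumes y: "(y has_real_derivative 0) (at z within S)"
  shows "((\<lambda>w. \<omega> (y w)) has_real_derivative 0) (at z within S)"
proof -
  have "((\<lambda>w. B * \<bar>(y w - y z) / (w - z)\<bar>) \<longlongrightarrow> B * \<bar>0\<bar>) (at z within S)"
    using y by (intro tendsto_intros) (simp add: has_field_derivative_iff)
  then have "((\<lambda>w. B * \<bar>(y w - y z) / (w - z)\<bar>) \<longlongrightarrow> 0) (at z within S)"
    by simp
  then have "((\<lambda>w. (\<omega> (y w) - \<omega> (y z)) / (w - z)) \<longlongrightarrow> 0) (at z within S)"
  proof (rule Lim_null_comparison[rotated], intro always_eventually allI)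
    fix w
    have "\<bar>\<omega> (y w) - \<omega> (y z)\<bar> \<le> B * \<bar>y w - y z\<bar>"
      using lipschitz_onD[OF primitive_lipschitz] by (simp add: dist_real_def)
    then show "norm ((\<omega> (y w) - \<omega> (y z)) / (w - z)) \<le> B * \<bar>(y w - y z) / (w - z)\<bar>"
      by (simp add: divide_right_mono)
  qed
  then show ?thesis by (simp add: has_field_derivative_iff)
qed

lemma integrable_on_comp_mult:
  fixes y y' :: "real \<Rightarrow> real"
  assumes meas: "\<phi> \<in> borel_measurable borel"
    and y: "continuous_on {a..b} y" and y': "continuous_on {a..b} y'"
  shows "(\<lambda>\<tau>. \<phi> (y \<tau>) * y' \<tau>) integrable_on {a..b}"
proof (rule measurable_bounded_by_integrable_imp_integrable_real)
  have ab: "{a..b} \<in> sets lebesgue" by simp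
  have "(\<lambda>\<tau>. \<phi> (y \<tau>)) \<in> borel_measurable (lebesgue_on {a..b})"
    using measurable_compose[OF continuous_imp_measurable_on_sets_lebesgue[OF y ab] meas]
    by (simp add: comp_def)
  then show "(\<lambda>\<tau>. \<phi> (y \<tau>) * y' \<tau>) \<in> borel_measurable (lebesgue_on {a..b})"
    by (intro borel_measurable_times continuous_imp_measurable_on_sets_lebesgue[OF y' ab])
  show "(\<lambda>\<tau>. B * \<bar>y' \<tau>\<bar>) integrable_on {a..b}"
    by (intro integrable_continuous_real continuous_intros y')
  show "\<bar>\<phi> (y \<tau>) * y' \<tau>\<bar> \<le> B * \<bar>y' \<tau>\<bar>" for \<tau>
    by (simp add: abs_mult mult_right_mono bound)
qed simp

lemma has_integral_chain_rule_pos: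
  fixes y y' :: "real \<Rightarrow> real"
  assumes ab: "a \<le> b"
    and y: "\<And>\<tau>. \<tau> \<in> {a..b} \<Longrightarrow> (y has_real_derivative y' \<tau>) (at \<tau>)"
    and pos: "\<And>\<tau>. \<tau> \<in> {a..b} \<Longrightarrow> y' \<tau> > 0"
  shows "((\<lambda>\<tau>. \<phi> (y \<tau>) * y' \<tau>) has_integral \<omega> (y b) - \<omega> (y a)) {a..b}"
proof -
  have "strict_mono_on {a..b} y"
  proof (rule strict_mono_onI)
    fix u u' assume uu': "u \<in> {a..b}" "u' \<in> {a..b}" "u < u'"
    show "y u < y u'"
    proof (rule DERIV_pos_imp_increasing[OF \<open>u < u'\<close>])
      fix t assume "u \<le> t" "t \<le> u'"
      then have "t \<in> {a..b}" using uu' by auto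
      then show "\<exists>d. (y has_real_derivative d) (at t) \<and> d > 0" using y pos by blast
    qed
  qed
  then have inj: "inj_on y {a..b}" and yab: "y a \<le> y b"
    using ab by (auto simp: strict_mono_on_imp_inj_on strict_mono_on_leD)
  have "continuous_on {a..b} y"
    using y by (intro DERIV_continuous_on) (auto intro: has_field_derivative_at_within)
  then have image: "y ` {a..b} = {y a..y b}"
    using continuous_injective_image_segment_1[of a b y] inj ab yab
    by (simp add: closed_segment_eq_real_ivl)
  have "\<phi> absolutely_integrable_on {y a..y b}"
    by (rule absolutely_integrable_integrable_bound[where g="\<lambda>_. B"])
       (use bound primitive[OF yab] in auto)
  then have "(\<lambda>\<tau>. \<bar>y' \<tau>\<bar> * \<phi> (y \<tau>)) absolutely_integrable_on {a..b} \<and>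
      integral {a..b} (\<lambda>\<tau>. \<bar>y' \<tau>\<bar> * \<phi> (y \<tau>)) = \<omega> (y b) - \<omega> (y a)"
    using has_absolute_integral_change_of_variables_1'[of "{a..b}" y y' \<phi>] inj y
      integral_unique[OF primitive[OF yab]]
    by (simp add: image has_field_derivative_at_within)
  then have "((\<lambda>\<tau>. \<bar>y' \<tau>\<bar> * \<phi> (y \<tau>)) has_integral \<omega> (y b) - \<omega> (y a)) {a..b}"
    using integrable_integral[OF set_lebesgue_integral_eq_integral(1)] by metis
  then show ?thesis
    by (rule has_integral_eq[rotated]) (use pos in \<open>simp add: abs_of_pos\<close>)
qed

lemma reflect: "bounded_primitive (\<lambda>u. - \<phi> (- u)) (\<lambda>u. \<omega> (- u)) B"
proof
  show "\<bar>- \<phi> (- z)\<bar> \<le> B" for z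
    using bound[of "-z"] by simp
  show "((\<lambda>u. - \<phi> (- u)) has_integral \<omega> (- q) - \<omega> (- p)) {p..q}" if "p \<le> q" for p q
    using has_integral_neg[OF primitive[of "-q" "-p"]] that
      has_integral_reflect_real[where f="\<lambda>u. - \<phi> (- u)" and a=p and b=q]
    by simp
qed

lemma has_integral_chain_rule_nonzero:
  fixes y y' :: "real \<Rightarrow> real"
  assumes ab: "a \<le> b"
    and y: "\<And>\<tau>. \<tau> \<in> {a..b} \<Longrightarrow> (y has_real_derivative y' \<tau>) (at \<tau>)"
    and y'_cont: "continuous_on {a..b} y'"
    and nonzero: "\<And>\<tau>. \<tau> \<in> {a..b} \<Longrightarrow> y' \<tau> \<noteq> 0"
  shows "((\<lambda>\<tau>. \<phi> (y \<tau>) * y' \<tau>) has_integral \<omega> (y b) - \<omega> (y a)) {a..b}"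
proof -
  have "connected (y' ` {a..b})"
    by (rule connected_continuous_image[OF y'_cont]) simp
  then have "(\<forall>\<tau>\<in>{a..b}. y' \<tau> > 0) \<or> (\<forall>\<tau>\<in>{a..b}. y' \<tau> < 0)"
  proof (rule contrapos_pp)
    assume "\<not> ?thesis"
    then obtain p q where "p \<in> {a..b}" "q \<in> {a..b}" "y' p \<le> 0" "0 \<le> y' q"
      by (auto simp: not_less)
    then have "0 \<in> y' ` {a..b}" if "connected (y' ` {a..b})"
      using that unfolding connected_iff_interval by blast
    then show "\<not> connected (y' ` {a..b})" using nonzero by auto
  qed
  then show ?thesis
  proof
    assume "\<forall>\<tau>\<in>{a..b}. y' \<tau> > 0"
    then show ?thesis by (intro has_integral_chain_rule_pos[OF ab y]) auto
  next
    assume "\<forall>\<tau>\<in>{a..b}. y' \<tau> < 0"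
    then have "((\<lambda>\<tau>. - \<phi> (- (- y \<tau>)) * - y' \<tau>) has_integral \<omega> (- (- y b)) - \<omega> (- (- y a))) {a..b}"
      using y by (intro bounded_primitive.has_integral_chain_rule_pos[OF reflect ab] DERIV_minus) auto
    then show ?thesis by simp
  qed
qed

lemma comp_minus_integral_deriv_critical:
  fixes y y' :: "real \<Rightarrow> real"
  assumes z: "c < z" "z < d"
    and y: "(y has_real_derivative 0) (at z)"
    and y'_cont: "isCont y' z" and critical: "y' z = 0"
    and integrable: "(\<lambda>\<tau>. \<phi> (y \<tau>) * y' \<tau>) integrable_on {c..d}"
  shows "((\<lambda>u. \<omega> (y u) - integral {c..u} (\<lambda>\<tau>. \<phi> (y \<tau>) * y' \<tau>)) has_real_derivative 0) (at z)"
proof -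
  have at_z: "at z within {c..d} = at z"
    using z by (simp add: at_within_Icc_at)
  have "((\<lambda>w. B * \<bar>y' w\<bar>) \<longlongrightarrow> 0) (at z)"
    using y'_cont critical unfolding isCont_def
    by (intro tendsto_mult_right_zero tendsto_rabs_zero) simp
  then have "((\<lambda>\<tau>. \<phi> (y \<tau>) * y' \<tau>) \<longlongrightarrow> 0) (at z)"
    by (rule Lim_null_comparison[rotated]) (simp add: abs_mult mult_right_mono bound)
  then have "((\<lambda>u. integral {c..u} (\<lambda>\<tau>. \<phi> (y \<tau>) * y' \<tau>)) has_real_derivative 0) (at z)"
    using integral_has_vector_derivative_continuous_at[OF integrable _ finite.emptyI, of z] z critical
    by (simp add: continuous_within at_z has_real_derivative_iff_has_vector_derivative)
  from DERIV_diff[OF has_real_derivative_comp_zero[OF y] this] show ?thesis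
    by simp
qed

lemma comp_minus_integral_eq_nonzero:
  fixes y y' :: "real \<Rightarrow> real"
  assumes ab: "a \<le> b" "{a..b} \<subseteq> {c<..<d}"
    and y: "\<And>\<tau>. \<tau> \<in> {c<..<d} \<Longrightarrow> (y has_real_derivative y' \<tau>) (at \<tau>)"
    and y'_cont: "continuous_on {c..d} y'" and nonzero: "\<And>\<tau>. \<tau> \<in> {a..b} \<Longrightarrow> y' \<tau> \<noteq> 0"
    and integrable: "(\<lambda>\<tau>. \<phi> (y \<tau>) * y' \<tau>) integrable_on {c..d}"
  shows "\<omega> (y b) - integral {c..b} (\<lambda>\<tau>. \<phi> (y \<tau>) * y' \<tau>)
    = \<omega> (y a) - integral {c..a} (\<lambda>\<tau>. \<phi> (y \<tau>) * y' \<tau>)"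
proof -
  have "((\<lambda>\<tau>. \<phi> (y \<tau>) * y' \<tau>) has_integral \<omega> (y b) - \<omega> (y a)) {a..b}"
  proof (rule has_integral_chain_rule_nonzero[OF ab(1)])
    show "(y has_real_derivative y' \<tau>) (at \<tau>)" if "\<tau> \<in> {a..b}" for \<tau>
      using ab(2) that by (intro y) blast
    show "continuous_on {a..b} y'"
      using ab(2) by (intro continuous_on_subset[OF y'_cont]) auto
  qed (rule nonzero)
  moreover have "a \<in> {a..b}" "b \<in> {a..b}"
    using ab(1) by auto
  then have "c \<le> a" "b \<le> d"
    using ab(2) by fastforce+
  then have "integral {c..a} (\<lambda>\<tau>. \<phi> (y \<tau>) * y' \<tau>) + integral {a..b} (\<lambda>\<tau>. \<phi> (y \<tau>) * y' \<tau>)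
      = integral {c..b} (\<lambda>\<tau>. \<phi> (y \<tau>) * y' \<tau>)"
    using ab(1) by (intro Henstock_Kurzweil_Integration.integral_combine
        integrable_on_subinterval[OF integrable]) auto
  ultimately show ?thesis
    by (simp add: integral_unique algebra_simps)
qed

lemma comp_minus_integral_deriv_regular:
  fixes y y' :: "real \<Rightarrow> real"
  assumes z: "c < z" "z < d"
    and y: "\<And>\<tau>. \<tau> \<in> {c<..<d} \<Longrightarrow> (y has_real_derivative y' \<tau>) (at \<tau>)"
    and y'_cont: "continuous_on {c..d} y'" and regular: "y' z \<noteq> 0"
    and integrable: "(\<lambda>\<tau>. \<phi> (y \<tau>) * y' \<tau>) integrable_on {c..d}"
  shows "((\<lambda>u. \<omega> (y u) - integral {c..u} (\<lambda>\<tau>. \<phi> (y \<tau>) * y' \<tau>)) has_real_derivative 0) (at z)"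
proof -
  define H where "H u = \<omega> (y u) - integral {c..u} (\<lambda>\<tau>. \<phi> (y \<tau>) * y' \<tau>)" for u
  have "isCont y' z"
    using y'_cont z by (simp add: continuous_on_interior)
  then obtain \<delta> where \<delta>: "\<delta> > 0" "\<And>w. dist z w < \<delta> \<Longrightarrow> y' w \<noteq> 0"
    using continuous_at_avoid[of z y' 0] regular by blast
  define r where "r = min \<delta> (min (z - c) (d - z))"
  have r: "r > 0" "ball z r \<subseteq> {c<..<d}"
    using \<delta>(1) z by (auto simp: r_def dist_real_def)
  have nonzero: "y' w \<noteq> 0" if "w \<in> ball z r" for w
    using that by (intro \<delta>(2)) (simp add: r_def)
  have interval: "{p..q} \<subseteq> ball z r" if "p \<in> ball z r" "q \<in> ball z r" for p q
    using that by (auto simp: dist_real_def abs_less_iff)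
  have H_eq: "H q = H p" if "p \<le> q" "p \<in> ball z r" "q \<in> ball z r" for p q
    unfolding H_def
  proof (rule comp_minus_integral_eq_nonzero[OF \<open>p \<le> q\<close> _ y y'_cont _ integrable])
    show "{p..q} \<subseteq> {c<..<d}"
      using interval[OF that(2,3)] r(2) by (rule order_trans)
    show "y' \<tau> \<noteq> 0" if "\<tau> \<in> {p..q}" for \<tau>
      using interval[OF \<open>p \<in> ball z r\<close> \<open>q \<in> ball z r\<close>] that by (intro nonzero) blast
  qed
  have H_const: "H z = H w" if w: "w \<in> ball z r" for w
  proof (cases "w \<le> z")
    case True
    then show ?thesis
      using H_eq[OF True w] r(1) by simp
  next
    case False
    then show ?thesis
      using H_eq[of z w] w r(1) by simp
  qed
  have "(H has_real_derivative 0) (at z)"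
    by (rule has_field_derivative_transform_within_open[where f="\<lambda>_. H z" and S="ball z r"])
       (use r(1) H_const in auto)
  then show ?thesis
    by (simp add: H_def[abs_def])
qed

lemma has_integral_chain_rule:
  fixes y y' :: "real \<Rightarrow> real"
  assumes cd: "c \<le> d"
    and y: "\<And>\<tau>. \<tau> \<in> {c..d} \<Longrightarrow> (y has_real_derivative y' \<tau>) (at \<tau> within {c..d})"
    and y'_cont: "continuous_on {c..d} y'"
    and meas: "\<phi> \<in> borel_measurable borel"
  shows "((\<lambda>\<tau>. \<phi> (y \<tau>) * y' \<tau>) has_integral \<omega> (y d) - \<omega> (y c)) {c..d}"
proof -
  define H where "H u = \<omega> (y u) - integral {c..u} (\<lambda>\<tau>. \<phi> (y \<tau>) * y' \<tau>)" for u
  have y_cont: "continuous_on {c..d} y"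
    using y by (rule DERIV_continuous_on)
  have integrable: "(\<lambda>\<tau>. \<phi> (y \<tau>) * y' \<tau>) integrable_on {c..d}"
    by (rule integrable_on_comp_mult[OF meas y_cont y'_cont])
  have y_at: "(y has_real_derivative y' \<tau>) (at \<tau>)" if "\<tau> \<in> {c<..<d}" for \<tau>
    using y[of \<tau>] that by (simp add: at_within_Icc_at)
  have "H d = H c"
  proof (cases "c = d")
    case False
    show ?thesis
    proof (rule DERIV_isconst_end[where f=H])
      show "c < d" using cd False by simp
      have "continuous_on {c..d} (\<lambda>u. \<omega> (y u))"
        by (rule continuous_on_compose2[OF primitive_continuous y_cont]) auto
      then show "continuous_on {c..d} H"
        unfolding H_def by (intro continuous_intros indefinite_integral_continuous_1 integrable)
    next
      fix z assume z: "c < z" "z < d"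
      have "isCont y' z"
        using y'_cont z by (simp add: continuous_on_interior)
      then show "(H has_real_derivative 0) (at z)"
        using comp_minus_integral_deriv_critical[OF z _ _ _ integrable] y_at[of z]
          comp_minus_integral_deriv_regular[OF z y_at y'_cont _ integrable] z
        unfolding H_def[abs_def] by (cases "y' z = 0") auto
    qed
  qed simp
  then have "integral {c..d} (\<lambda>\<tau>. \<phi> (y \<tau>) * y' \<tau>) = \<omega> (y d) - \<omega> (y c)"
    by (simp add: H_def)
  then show ?thesis
    using integrable_integral[OF integrable] by simp
qed

end

lemma abs_le_Linf_norm:
  fixes f :: "real \<Rightarrow> real"
  assumes cont: "continuous_on UNIV f" and bdd: "bounded (range f)"
  shows "\<bar>f y\<bar> \<le> Linf_norm f"
proof -
  define E where "E = esssup lborel (\<lambda>y. ereal \<bar>f y\<bar>)"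
  obtain W where W: "\<And>y. \<bar>f y\<bar> \<le> W"
    using bdd unfolding bounded_iff by auto
  have "f \<in> borel_measurable lborel"
    using borel_measurable_continuous_onI[OF cont] by simp
  then have "E \<le> ereal W"
    unfolding E_def by (intro esssup_I borel_measurable_ereal borel_measurable_abs) (use W in auto)
  moreover have "ereal \<bar>f y\<bar> \<le> E"
  proof (rule mem_closed_if_AE_lebesgue[where C="{y. ereal \<bar>f y\<bar> \<le> E}", simplified])
    show "closed {y. ereal \<bar>f y\<bar> \<le> E}"
      by (intro closed_Collect_le continuous_on_ereal continuous_intros cont)
    show "AE y in lebesgue. ereal \<bar>f y\<bar> \<le> E"
      unfolding E_def by (intro AE_completion esssup_AE)
  qed
  ultimately show ?thesis
    unfolding Linf_norm_def E_def[symmetric] by (cases E) auto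
qed

lemma weighted_mean_atLeastAtMost:
  fixes w f :: "'a \<Rightarrow> real"
  assumes "finite J" and w: "\<And>k. k \<in> J \<Longrightarrow> 0 \<le> w k" and pos: "sum w J > 0"
    and f: "\<And>k. k \<in> J \<Longrightarrow> f k \<in> {lo..hi}"
  shows "(\<Sum>k\<in>J. w k * f k) / sum w J \<in> {lo..hi}"
proof -
  have "(\<Sum>k\<in>J. w k * lo) \<le> (\<Sum>k\<in>J. w k * f k)" "(\<Sum>k\<in>J. w k * f k) \<le> (\<Sum>k\<in>J. w k * hi)"
    using w f by (auto intro!: sum_mono mult_left_mono)
  then have "sum w J * lo \<le> (\<Sum>k\<in>J. w k * f k)" "(\<Sum>k\<in>J. w k * f k) \<le> sum w J * hi"
    by (simp_all add: sum_distrib_right)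
  then show ?thesis
    using pos by (auto simp: pos_le_divide_eq pos_divide_le_eq mult.commute)
qed

lemma invariant_finite_jumps:
  fixes C :: "real set" and P :: "real \<Rightarrow> bool"
  assumes finite: "finite C" and pos: "C \<subseteq> {0<..}"
    and init: "P 0"
    and flow: "\<And>p t. 0 \<le> p \<Longrightarrow> p \<le> t \<Longrightarrow> {p<..t} \<inter> C = {} \<Longrightarrow> P p \<Longrightarrow> P t"
    and jump: "\<And>s a. a \<in> C \<Longrightarrow> 0 \<le> s \<Longrightarrow> s < a \<Longrightarrow> {s..<a} \<inter> C = {} \<Longrightarrow> P s \<Longrightarrow> P a"
    and "0 \<le> t"
  shows "P t"
proof -
  have "P t" if "0 \<le> t" "card (C \<inter> {..t}) = n" for n t
    using that
  proof (induction n arbitrary: t rule: less_induct)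
    case (less n t)
    define a where "a = Max (insert 0 (C \<inter> {..t}))"
    have a: "0 \<le> a" "a \<le> t" "a = 0 \<or> a \<in> C" "{a<..t} \<inter> C = {}"
      using Max_in[of "insert 0 (C \<inter> {..t})"] Max_ge[of "insert 0 (C \<inter> {..t})"] finite less.prems(1)
      by (fastforce simp: a_def)+
    have "P a"
    proof (cases "a \<in> C")
      case False
      then show ?thesis
        using a(3) init by auto
    next
      case True
      define s0 where "s0 = Max (insert 0 (C \<inter> {..<a}))"
      have s0: "0 \<le> s0" "s0 < a" "{s0<..<a} \<inter> C = {}"
        using Max_in[of "insert 0 (C \<inter> {..<a})"] Max_ge[of "insert 0 (C \<inter> {..<a})"]
          finite True pos by (fastforce simp: s0_def)+
      \<comment> \<open>\<open>s0\<close> itself may be a jump, so restart from a point strictly after it\<close>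
      define s where "s = (s0 + a) / 2"
      have "s0 < s" "s < a"
        using s0 by (auto simp: s_def)
      then have "{s..<a} \<subseteq> {s0<..<a}"
        by auto
      then have s: "0 \<le> s" "s < a" "{s..<a} \<inter> C = {}"
        using s0 \<open>s0 < s\<close> \<open>s < a\<close> by auto
      have "C \<inter> {..s} \<subseteq> C \<inter> {..t}" "a \<in> C \<inter> {..t} - C \<inter> {..s}"
        using s a True by auto
      then have "card (C \<inter> {..s}) < n"
        using psubset_card_mono[of "C \<inter> {..t}"] finite less.prems(2) by blast
      then show ?thesis
        using jump[OF True s] less.IH s(1) by blast
    qed
    then show "P t"
      using flow[OF a(1,2,4)] by blast
  qed
  then show ?thesis
    using \<open>0 \<le> t\<close> by blast
qed

lemma finite_collision_times: "finite {t. collision_time N x t}"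
proof -
  define first_meeting where "first_meeting i j =
    {t. 0 < t \<and> x i t = x j t \<and> (\<forall>s. 0 \<le> s \<and> s < t \<longrightarrow> x i s \<noteq> x j s)}" for i j
  have "finite (first_meeting i j)" for i j
  proof (cases "first_meeting i j = {}")
    case False
    then obtain t0 where t0: "t0 \<in> first_meeting i j" by blast
    \<comment> \<open>an earlier first meeting of \<open>i\<close> and \<open>j\<close> would be a meeting before \<open>t0\<close>\<close>
    have "t = t0" if "t \<in> first_meeting i j" for t
      using that t0 by (cases t t0 rule: linorder_cases) (auto simp: first_meeting_def)
    then have "first_meeting i j \<subseteq> {t0}" by blast
    then show ?thesis by (rule finite_subset) simp
  qed simp
  moreover have "{t. collision_time N x t} = (\<Union>i<N. \<Union>j<N. first_meeting i j)"
    unfolding collision_time_def first_meeting_def by auto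
  ultimately show ?thesis by simp
qed

locale sticky_CS_solution = bounded_primitive \<phi> \<omega> B
  for \<phi> \<omega> :: "real \<Rightarrow> real" and B :: real +
  fixes N :: nat and m x0 v0 :: "nat \<Rightarrow> real" and x v :: "nat \<Rightarrow> real \<Rightarrow> real"
  assumes phi_measurable: "\<phi> \<in> borel_measurable borel"
    and mass_pos: "\<And>i. i < N \<Longrightarrow> m i > 0"
    and solution: "sticky_CS \<phi> N m x0 v0 x v"
begin

lemma initial: "i < N \<Longrightarrow> x i 0 = x0 i \<and> v i 0 = v0 i"
  using solution unfolding sticky_CS_def by (elim conjE) blast

lemma x_continuous: "i < N \<Longrightarrow> continuous_on {0..} (x i)"
  using solution unfolding sticky_CS_def by (elim conjE) blast

lemma has_derivative_off_collision:
  assumes "0 \<le> t" "\<not> collision_time N x t" "i < N"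
  shows "(x i has_real_derivative v i t) (at t within {0..})"
    and "(v i has_real_derivative (\<Sum>j<N. m j * \<phi> (x i t - x j t) * (v j t - v i t)))
           (at t within {0..})"
  using solution assms unfolding sticky_CS_def by (elim conjE; blast)+

lemma sticking_rule:
  assumes "collision_time N x t"
  shows "\<exists>l. (\<forall>j<N. (v j \<longlongrightarrow> l j) (at_left t)) \<and>
    (\<forall>i<N. v i t = (\<Sum>j\<in>cluster N x i t. m j * l j) / (\<Sum>j\<in>cluster N x i t. m j) \<and>
      (v i \<longlongrightarrow> v i t) (at_right t))"
  using solution assms unfolding sticky_CS_def by (elim conjE) blast

definition potential :: "nat \<Rightarrow> real \<Rightarrow> real" where
  "potential i t = (\<Sum>j<N. m j * \<omega> (x i t - x j t))"

definition psi :: "nat \<Rightarrow> real \<Rightarrow> real" where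
  "psi i t = v i t + potential i t"

lemma potential_continuous:
  assumes "i < N"
  shows "continuous_on {0..} (potential i)"
  unfolding potential_def[abs_def]
proof (intro continuous_on_sum continuous_on_mult_left)
  fix j assume "j \<in> {..<N}"
  then show "continuous_on {0..} (\<lambda>t. \<omega> (x i t - x j t))"
    using assms by (intro continuous_on_compose2[OF primitive_continuous continuous_on_diff] x_continuous) auto
qed

lemma v_tendsto_at_right:
  assumes "0 \<le> t" "i < N"
  shows "(v i \<longlongrightarrow> v i t) (at_right t)"
proof (cases "collision_time N x t")
  case True
  then show ?thesis
    using sticking_rule assms(2) by blast
next
  case False
  have "continuous (at t within {0..}) (v i)"
    using has_derivative_off_collision(2)[OF assms(1) False assms(2)] by (rule DERIV_continuous)
  then have "(v i \<longlongrightarrow> v i t) (at t within {0..})"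
    by (simp add: continuous_within)
  then show ?thesis
    by (rule tendsto_within_subset) (use assms(1) in auto)
qed

lemma psi_tendsto_at_right:
  assumes "0 \<le> t" "i < N"
  shows "(psi i \<longlongrightarrow> psi i t) (at_right t)"
proof -
  have "(potential i \<longlongrightarrow> potential i t) (at t within {0..})"
    using potential_continuous[OF assms(2)] assms(1) by (simp add: continuous_on_def)
  then have "(potential i \<longlongrightarrow> potential i t) (at_right t)"
    by (rule tendsto_within_subset) (use assms(1) in auto)
  then show ?thesis
    unfolding psi_def[abs_def] by (intro tendsto_add v_tendsto_at_right assms)
qed

lemma psi_constant_collision_free:
  assumes cd: "0 \<le> c" "c \<le> d" and free: "\<And>u. u \<in> {c..d} \<Longrightarrow> \<not> collision_time N x u"
    and i: "i < N"
  shows "psi i d = psi i c"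
proof -
  have sub: "{c..d} \<subseteq> {0..}" using cd by auto
  have dx: "(x k has_real_derivative v k \<tau>) (at \<tau> within {c..d})" if "k < N" "\<tau> \<in> {c..d}" for k \<tau>
    using has_derivative_off_collision(1)[OF _ free[OF that(2)] that(1)] that(2) sub
    by (auto intro: DERIV_subset)
  have dv: "(v k has_real_derivative (\<Sum>j<N. m j * \<phi> (x k \<tau> - x j \<tau>) * (v j \<tau> - v k \<tau>)))
      (at \<tau> within {c..d})" if "k < N" "\<tau> \<in> {c..d}" for k \<tau>
    using has_derivative_off_collision(2)[OF _ free[OF that(2)] that(1)] that(2) sub
    by (auto intro: DERIV_subset)
  have pair: "((\<lambda>\<tau>. \<phi> (x i \<tau> - x j \<tau>) * (v i \<tau> - v j \<tau>)) has_integral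
      \<omega> (x i d - x j d) - \<omega> (x i c - x j c)) {c..d}" if j: "j < N" for j
  proof (rule has_integral_chain_rule[OF cd(2) _ _ phi_measurable])
    show "((\<lambda>\<tau>. x i \<tau> - x j \<tau>) has_real_derivative v i \<tau> - v j \<tau>) (at \<tau> within {c..d})"
      if "\<tau> \<in> {c..d}" for \<tau>
      using dx[OF i that] dx[OF j that] by (rule DERIV_diff)
    show "continuous_on {c..d} (\<lambda>\<tau>. v i \<tau> - v j \<tau>)"
      using DERIV_continuous_on[OF dv[OF i]] DERIV_continuous_on[OF dv[OF j]] by (rule continuous_on_diff)
  qed
  have integrand: "(\<lambda>\<tau>. \<Sum>j<N. - m j * (\<phi> (x i \<tau> - x j \<tau>) * (v i \<tau> - v j \<tau>)))
      = (\<lambda>\<tau>. \<Sum>j<N. m j * \<phi> (x i \<tau> - x j \<tau>) * (v j \<tau> - v i \<tau>))"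
    by (intro ext sum.cong) (simp_all add: algebra_simps)
  have "((\<lambda>\<tau>. \<Sum>j<N. m j * \<phi> (x i \<tau> - x j \<tau>) * (v j \<tau> - v i \<tau>))
      has_integral v i d - v i c) {c..d}"
    using dv[OF i, unfolded has_real_derivative_iff_has_vector_derivative] cd(2)
    by (intro fundamental_theorem_of_calculus) auto
  moreover have "((\<lambda>\<tau>. \<Sum>j<N. m j * \<phi> (x i \<tau> - x j \<tau>) * (v j \<tau> - v i \<tau>)) has_integral
      (\<Sum>j<N. - m j * (\<omega> (x i d - x j d) - \<omega> (x i c - x j c)))) {c..d}"
    unfolding integrand[symmetric]
    by (rule has_integral_sum[OF finite_lessThan], intro has_integral_mult_right pair) simp
  ultimately have "v i d - v i c = (\<Sum>j<N. - m j * (\<omega> (x i d - x j d) - \<omega> (x i c - x j c)))"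
    by (rule has_integral_unique)
  also have "\<dots> = potential i c - potential i d"
    unfolding potential_def by (simp add: sum_subtractf[symmetric] algebra_simps)
  finally show ?thesis
    unfolding psi_def by simp
qed

lemma psi_constant_after:
  assumes "0 \<le> p" "p \<le> t" and free: "\<And>u. u \<in> {p<..t} \<Longrightarrow> \<not> collision_time N x u"
    and i: "i < N"
  shows "psi i t = psi i p"
proof (cases "p = t")
  case False
  then have "p < t" using assms(2) by simp
  have "\<forall>\<^sub>F u in at_right p. psi i u = psi i t"
    using eventually_at_right_real[OF \<open>p < t\<close>]
  proof (rule eventually_mono)
    fix u assume "u \<in> {p<..<t}"
    then show "psi i u = psi i t"
      using assms(1) free by (intro psi_constant_collision_free[OF _ _ _ i, symmetric]) auto
  qed
  then have "((\<lambda>_. psi i t) \<longlongrightarrow> psi i p) (at_right p)"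
    using psi_tendsto_at_right[OF assms(1) i] by (rule Lim_transform_eventually[rotated])
  then show ?thesis
    using tendsto_unique[OF trivial_limit_at_right_real _ tendsto_const] by metis
qed simp

lemma psi_eventually_const_at_left:
  assumes s: "0 \<le> s" "s < a"
    and free: "\<And>u. u \<in> {s..<a} \<Longrightarrow> \<not> collision_time N x u" and k: "k < N"
  shows "\<forall>\<^sub>F u in at_left a. psi k u = psi k s"
  using eventually_at_left_real[OF s(2)]
proof (rule eventually_mono)
  fix u assume "u \<in> {s<..<a}"
  then show "psi k u = psi k s"
    using s free by (intro psi_constant_collision_free[OF _ _ _ k]) auto
qed

lemma psi_at_collision:
  assumes a: "collision_time N x a" and s: "0 \<le> s" "s < a"
    and free: "\<And>u. u \<in> {s..<a} \<Longrightarrow> \<not> collision_time N x u" and i: "i < N"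
  shows "psi i a = (\<Sum>k\<in>cluster N x i a. m k * psi k s) / (\<Sum>k\<in>cluster N x i a. m k)"
proof -
  obtain l where l: "\<forall>j<N. (v j \<longlongrightarrow> l j) (at_left a)"
    and v_a: "v i a = (\<Sum>k\<in>cluster N x i a. m k * l k) / (\<Sum>k\<in>cluster N x i a. m k)"
    using sticking_rule[OF a] i by blast
  have psi_s: "psi k s = l k + potential k a" if k: "k < N" for k
  proof -
    have "isCont (potential k) a"
      using potential_continuous[OF k] a s by (intro continuous_on_interior) auto
    then have "(psi k \<longlongrightarrow> l k + potential k a) (at_left a)"
      unfolding psi_def[abs_def] using l k
      by (intro tendsto_add) (auto simp: isCont_def intro: tendsto_within_subset)
    moreover note psi_eventually_const_at_left[OF s free k]
    ultimately have "((\<lambda>_. psi k s) \<longlongrightarrow> l k + potential k a) (at_left a)"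
      by (rule Lim_transform_eventually)
    then show ?thesis
      using tendsto_unique[OF trivial_limit_at_left_real _ tendsto_const] by metis
  qed
  define J where "J = cluster N x i a"
  have J: "finite J" "J \<subseteq> {..<N}" "i \<in> J"
    using i by (auto simp: J_def cluster_def)
  have "(\<Sum>k\<in>J. m k * psi k s) = (\<Sum>k\<in>J. m k * l k + m k * potential i a)"
  proof (rule sum.cong[OF refl])
    fix k assume "k \<in> J"
    then have "k < N" "potential k a = potential i a"
      by (auto simp: J_def cluster_def potential_def)
    then show "m k * psi k s = m k * l k + m k * potential i a"
      by (simp add: psi_s distrib_left)
  qed
  also have "\<dots> = (\<Sum>k\<in>J. m k * l k) + sum m J * potential i a"
    by (simp add: sum.distrib sum_distrib_right)
  moreover have "sum m J > 0"
    using J mass_pos by (intro sum_pos2[OF J(1,3)]) (auto simp: less_imp_le subset_iff)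
  ultimately have "(\<Sum>k\<in>J. m k * psi k s) / sum m J = v i a + potential i a"
    using v_a by (simp add: J_def add_divide_distrib)
  then show ?thesis
    by (simp add: psi_def J_def)
qed

lemma psi_at_collision_atLeastAtMost:
  assumes a: "collision_time N x a" and s: "0 \<le> s" "s < a"
    and free: "\<And>u. u \<in> {s..<a} \<Longrightarrow> \<not> collision_time N x u" and i: "i < N"
    and before: "\<And>k. k < N \<Longrightarrow> psi k s \<in> {lo..hi}"
  shows "psi i a \<in> {lo..hi}"
proof -
  have "(\<Sum>k\<in>cluster N x i a. m k * psi k s) / (\<Sum>k\<in>cluster N x i a. m k) \<in> {lo..hi}"
  proof (rule weighted_mean_atLeastAtMost)
    show "finite (cluster N x i a)" "\<And>k. k \<in> cluster N x i a \<Longrightarrow> 0 \<le> m k"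
      using mass_pos by (auto simp: cluster_def less_imp_le)
    show "0 < sum m (cluster N x i a)"
      using i mass_pos by (intro sum_pos2[of _ i]) (auto simp: cluster_def less_imp_le)
    show "psi k s \<in> {lo..hi}" if "k \<in> cluster N x i a" for k
      using before that by (simp add: cluster_def)
  qed
  then show ?thesis
    using psi_at_collision[OF a s free i] by simp
qed

lemma psi_bounds:
  assumes "0 \<le> t" "i < N"
  shows "psi i t \<in> {Min ((\<lambda>k. psi k 0) ` {..<N})..Max ((\<lambda>k. psi k 0) ` {..<N})}"
proof -
  define lo where "lo = Min ((\<lambda>k. psi k 0) ` {..<N})"
  define hi where "hi = Max ((\<lambda>k. psi k 0) ` {..<N})"
  have "\<forall>i<N. psi i t \<in> {lo..hi}"
  proof (rule invariant_finite_jumps[OF finite_collision_times _ _ _ _ assms(1)])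
    show "{t. collision_time N x t} \<subseteq> {0<..}"
      by (auto simp: collision_time_def)
    show "\<forall>i<N. psi i 0 \<in> {lo..hi}"
      unfolding lo_def hi_def by (auto intro: Min_le Max_ge)
    show "\<forall>i<N. psi i t \<in> {lo..hi}"
      if "0 \<le> p" "p \<le> t" "{p<..t} \<inter> {t. collision_time N x t} = {}" "\<forall>i<N. psi i p \<in> {lo..hi}"
      for p t
      using that psi_constant_after[OF that(1,2)] by (metis disjoint_iff mem_Collect_eq)
  next
    fix s a
    assume jump: "a \<in> {t. collision_time N x t}" "0 \<le> s" "s < a"
      "{s..<a} \<inter> {t. collision_time N x t} = {}" "\<forall>i<N. psi i s \<in> {lo..hi}"
    show "\<forall>i<N. psi i a \<in> {lo..hi}"
    proof (intro allI impI)
      fix i assume "i < N"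
      show "psi i a \<in> {lo..hi}"
        by (rule psi_at_collision_atLeastAtMost[where s=s]) (use jump \<open>i < N\<close> in auto)
    qed
  qed
  then show ?thesis
    using assms(2) by (simp add: lo_def hi_def)
qed

lemma potential_bounds:
  assumes nonneg: "\<And>z. 0 \<le> \<omega> z" and total: "(\<Sum>j<N. m j) = 1" and bdd: "bounded (range \<omega>)"
  shows "potential i t \<in> {0..Linf_norm \<omega>}"
proof -
  have "potential i t \<le> (\<Sum>j<N. m j * Linf_norm \<omega>)"
    unfolding potential_def using mass_pos abs_le_Linf_norm[OF primitive_continuous bdd]
    by (intro sum_mono mult_left_mono) (auto simp: less_imp_le abs_le_iff)
  also have "\<dots> = Linf_norm \<omega>"
    using total by (simp add: sum_distrib_right[symmetric])
  finally show ?thesis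
    unfolding potential_def using mass_pos nonneg
    by (auto intro!: sum_nonneg simp: less_imp_le)
qed

lemma x_displacement:
  assumes t: "0 \<le> t" and i: "i < N" and v_bound: "\<And>\<tau>. 0 \<le> \<tau> \<Longrightarrow> \<bar>v i \<tau>\<bar> \<le> M"
  shows "\<bar>x i t - x0 i\<bar> \<le> M * t"
proof -
  have "(v i has_integral x i t - x i 0) {0..t}"
  proof (rule fundamental_theorem_of_calculus_interior_strong[OF finite_collision_times t])
    show "continuous_on {0..t} (x i)"
      by (rule continuous_on_subset[OF x_continuous[OF i]]) auto
    fix \<tau> assume \<tau>: "\<tau> \<in> {0<..<t} - {t. collision_time N x t}"
    then have "at \<tau> within {0..} = at \<tau>"
      by (intro at_within_interior) (auto simp: interior_real_atLeast)
    then show "(x i has_vector_derivative v i \<tau>) (at \<tau>)"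
      using has_derivative_off_collision(1)[OF _ _ i, of \<tau>] \<tau>
      by (simp add: has_real_derivative_iff_has_vector_derivative)
  qed
  moreover have "0 \<le> M"
    using v_bound[of 0] by linarith
  ultimately have "norm (x i t - x i 0) \<le> M * Henstock_Kurzweil_Integration.content {0..t}"
    using v_bound by (intro has_integral_bound_real[OF _ finite.emptyI]) auto
  then show ?thesis
    using t initial[OF i] by simp
qed

end

theorem proposition2p2:
  fixes \<omega> \<phi> :: "real \<Rightarrow> real" and N :: nat and m x0 v0 :: "nat \<Rightarrow> real"
    and x v :: "nat \<Rightarrow> real \<Rightarrow> real" and R0 :: real
  assumes omega_nonneg: "\<forall>y. \<omega> y \<ge> 0"
    and omega_int: "integrable lborel \<omega>"
    and omega_mass: "integral\<^sup>L lborel \<omega> = 1"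
    and omega_bdd: "bounded (range \<omega>)"
    and phi_meas: "\<phi> \<in> borel_measurable lborel"
    and phi_int: "integrable lborel \<phi>"
    and phi_bdd: "bounded (range \<phi>)"
    and phi_deriv: "\<forall>a b. a \<le> b \<longrightarrow> (\<phi> has_integral (\<omega> b - \<omega> a)) {a..b}"
    and m_pos: "\<forall>i<N. m i > 0"
    and m_sum: "(\<Sum>i<N. m i) = 1"
    and x0_ord: "\<forall>i. Suc i < N \<longrightarrow> x0 i \<le> x0 (Suc i)"
    and sol: "sticky_CS \<phi> N m x0 v0 x v"
  defines "\<psi>0 \<equiv> (\<lambda>i. v0 i + (\<Sum>j<N. m j * \<omega> (x0 i - x0 j)))"
    and "\<psi> \<equiv> (\<lambda>i t. v i t + (\<Sum>j<N. m j * \<omega> (x i t - x j t)))"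
  shows "let \<psi>lo = Min (\<psi>0 ` {..<N}); \<psi>hi = Max (\<psi>0 ` {..<N});
             Mt = max \<bar>\<psi>lo - Linf_norm \<omega>\<bar> \<bar>\<psi>hi\<bar> in
         (\<forall>i<N. \<forall>t\<ge>0. \<psi> i t \<in> {\<psi>lo..\<psi>hi} \<and>
              \<psi>lo - Linf_norm \<omega> \<le> v i t \<and> v i t \<le> \<psi>hi)
         \<and> ((\<forall>i<N. x0 i \<in> {-R0..R0}) \<longrightarrow>
              (\<forall>t\<ge>0. \<forall>i<N. x i t \<in> {-(R0 + t * Mt)..R0 + t * Mt}))"
proof -
  obtain B where "\<And>z. \<bar>\<phi> z\<bar> \<le> B"
    using phi_bdd unfolding bounded_iff by auto
  then interpret sticky_CS_solution \<phi> \<omega> B N m x0 v0 x v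
    using phi_deriv phi_meas m_pos sol by unfold_locales (auto simp: measurable_lborel2)
  define lo hi L where "lo = Min (\<psi>0 ` {..<N})" "hi = Max (\<psi>0 ` {..<N})" "L = Linf_norm \<omega>"
  define Mt where "Mt = max \<bar>lo - L\<bar> \<bar>hi\<bar>"
  have "\<psi>0 ` {..<N} = (\<lambda>k. psi k 0) ` {..<N}"
    using initial unfolding \<psi>0_def psi_def potential_def by (intro image_cong) auto
  moreover have "\<psi> = psi"
    unfolding \<psi>_def psi_def[abs_def] potential_def ..
  ultimately have velocity: "\<psi> i t \<in> {lo..hi} \<and> lo - L \<le> v i t \<and> v i t \<le> hi" if "i < N" "0 \<le> t" for i t
    using psi_bounds[OF that(2,1)] potential_bounds[OF omega_nonneg[rule_format] m_sum omega_bdd, of i t]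
    unfolding lo_hi_L_def psi_def by auto
  have displacement: "\<bar>x i t - x0 i\<bar> \<le> Mt * t" if "0 \<le> t" "i < N" for t i
    by (rule x_displacement[OF that]) (use velocity[OF that(2)] in \<open>force simp: Mt_def\<close>)
  have "x i t \<in> {-(R0 + t * Mt)..R0 + t * Mt}" if "\<forall>i<N. x0 i \<in> {-R0..R0}" "0 \<le> t" "i < N" for t i
    using that(1,3) displacement[OF that(2,3)] by (auto simp: abs_le_iff mult.commute)
  then show ?thesis
    using velocity unfolding Let_def lo_hi_L_def[symmetric] Mt_def[symmetric] by blast
qed

end
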